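(* In the standing setting of the context, assume $d_1>d_4$ and that every ball $B(x,r)$ is relatively compact in $M$. Let $u(x,y)=\int_0^\infty p(t,x,y)\,dt$ be the Green function of $X$. Then for all $x,y\in M$, $$u(x,y)\asymp\frac{\phi(d(x,y))}{V(d(x,y))}.$$
   Context: Standing setting: $(M,d)$ is a locally compact separable metric space, $\mu$ a positive Radon measure on $M$ with full support, $(\mathcal{E},\mathcal{F})$ a regular Dirichlet form on $L^2(M;\mu)$ (no killing part), and $X$ the associated $\mu$-symmetric Hunt process. $V,\phi$ are increasing functions on $(0,\infty)$, $\phi^{-1}$ the inverse of $\phi$, with constants $c_i,d_i>0$ such that $c_1(R/r)^{d_1}\le V(R)/V(r)\le c_2(R/r)^{d_2}$ and $c_3(R/r)^{d_3}\le\phi(R)/\phi(r)\le c_4(R/r)^{d_4}$ for all $0<r<R<\infty$. $X$ has a symmetric heat kernel $p(t,x,y)$ defined for all $x,y\in M$, $t>0$, with $p(t,x,y)\asymp\frac{1}{V(\phi^{-1}(t))}\wedge\frac{t}{V(d(x,y))\phi(d(x,y))}$ for all $x,y,t$. $f\asymp g$ means $c^{-1}f\le g\le cf$ with $c\ge1$ independent of the variables. *)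

theory Defs
  imports "HOL-Analysis.Analysis"
begin

text \<open>Two-sided heat kernel profile
  1/V(phi^{-1}(t)) \<and> t/(V(d(x,y)) phi(d(x,y))).
  On the diagonal (d(x,y) = 0) the second term is +infinity by convention,
  so the profile is 1/V(phi^{-1}(t)).\<close>
definition hk_profile ::
  "(real \<Rightarrow> real) \<Rightarrow> (real \<Rightarrow> real) \<Rightarrow> (real \<Rightarrow> real) \<Rightarrow> real \<Rightarrow> 'a::metric_space \<Rightarrow> 'a \<Rightarrow> real"
where
  "hk_profile V \<phi> \<phi>inv t x y =
     (if x = y then 1 / V (\<phi>inv t)
      else min (1 / V (\<phi>inv t)) (t / (V (dist x y) * \<phi> (dist x y))))"

definition green_fun :: "(real \<Rightarrow> 'a \<Rightarrow> 'a \<Rightarrow> real) \<Rightarrow> 'a \<Rightarrow> 'a \<Rightarrow> ennreal" where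
  "green_fun p x y = (\<integral>\<^sup>+ t \<in> {0<..}. ennreal (p t x y) \<partial>lborel)"

end

theory Submission
  imports Defs
begin

text \<open>With \<open>r = d(x,y)\<close>, split the time integral at \<open>t = \<phi>(r)\<close>. For \<open>t \<le> \<phi>(r)\<close> the
  kernel is at most of order \<open>1/V(r)\<close>, and at least of that order on \<open>[\<phi>(r)/2, \<phi>(r)]\<close>,
  so this part contributes \<open>\<phi>(r)/V(r)\<close>. For \<open>t > \<phi>(r)\<close> the kernel is at most of order
  \<open>1/V(\<phi>inv t)\<close>, and the lower scaling of \<open>V\<close> together with the upper scaling of \<open>\<phi>\<close> makes
  this decay like \<open>t powr (- d1/d4)\<close>; since \<open>d1 > d4\<close> the tail is integrable and is again
  of order \<open>\<phi>(r)/V(r)\<close>.\<close>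

lemma nn_integral_powr_atLeast:
  fixes a b :: real
  assumes "a > 1" "b > 0"
  shows "(\<integral>\<^sup>+ t. ennreal (t powr (-a)) * indicator {b..} t \<partial>lborel)
    = ennreal (b powr (1 - a) / (a - 1))"
proof -
  define F where "F t = - (t powr (1 - a) / (a - 1))" for t :: real
  have "(\<integral>\<^sup>+ t. ennreal (t powr (-a)) * indicator {b..} t \<partial>lborel) = ennreal (0 - F b)"
  proof (rule nn_integral_FTC_atLeast)
    show "DERIV F t :> t powr (-a)" if "b \<le> t" for t
    proof -
      have "DERIV F t :> - ((1 - a) * t powr (1 - a - 1) / (a - 1))"
        unfolding F_def using that assms by (intro derivative_eq_intros) auto
      moreover have "- ((1 - a) * t powr (1 - a - 1) / (a - 1)) = t powr (-a)"
        using \<open>a > 1\<close> by (simp add: divide_simps algebra_simps)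
      ultimately show ?thesis by simp
    qed
    have "((\<lambda>t. t powr (1 - a)) \<longlongrightarrow> 0) at_top"
      using \<open>a > 1\<close> by (intro tendsto_neg_powr filterlim_ident) auto
    then show "(F \<longlongrightarrow> 0) at_top"
      unfolding F_def using tendsto_minus[OF tendsto_divide_zero[of _ _ "a - 1"]] by fastforce
  qed auto
  then show ?thesis unfolding F_def by simp
qed

lemma nn_integral_Ioi_ge_const:
  fixes g :: "real \<Rightarrow> real"
  assumes "0 < a" "a \<le> b" "m \<ge> 0" and g: "\<And>t. a \<le> t \<Longrightarrow> t \<le> b \<Longrightarrow> m \<le> g t"
  shows "ennreal (m * (b - a)) \<le> (\<integral>\<^sup>+ t \<in> {0<..}. ennreal (g t) \<partial>lborel)"
proof -
  have "ennreal (m * (b - a)) = (\<integral>\<^sup>+ t. ennreal m * indicator {a..b} t \<partial>lborel)"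
    using assms by (simp add: nn_integral_cmult_indicator ennreal_mult)
  also have "\<dots> \<le> (\<integral>\<^sup>+ t \<in> {0<..}. ennreal (g t) \<partial>lborel)"
    using assms by (intro nn_integral_mono) (auto simp: indicator_def intro: ennreal_leI)
  finally show ?thesis .
qed

lemma nn_integral_Ioi_le_const_powr:
  fixes g :: "real \<Rightarrow> real"
  assumes "a > 1" "b > 0" "A \<ge> 0" "B \<ge> 0"
    and near: "\<And>t. 0 < t \<Longrightarrow> t \<le> b \<Longrightarrow> g t \<le> A"
    and far: "\<And>t. b < t \<Longrightarrow> g t \<le> B * t powr (-a)"
  shows "(\<integral>\<^sup>+ t \<in> {0<..}. ennreal (g t) \<partial>lborel)
    \<le> ennreal (A * b + B * (b powr (1 - a) / (a - 1)))"
proof -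
  have "(\<integral>\<^sup>+ t \<in> {0<..}. ennreal (g t) \<partial>lborel)
      \<le> (\<integral>\<^sup>+ t. ennreal A * indicator {0..b} t
            + ennreal B * (ennreal (t powr (-a)) * indicator {b..} t) \<partial>lborel)"
  proof (intro nn_integral_mono)
    fix t
    consider "t \<le> 0" | "0 < t" "t \<le> b" | "b < t" by linarith
    then show "ennreal (g t) * indicator {0<..} t
        \<le> ennreal A * indicator {0..b} t + ennreal B * (ennreal (t powr (-a)) * indicator {b..} t)"
    proof cases
      case 2
      then show ?thesis using near[of t] by (simp add: add_increasing2 ennreal_leI)
    next
      case 3
      then show ?thesis using far[of t] \<open>b > 0\<close> \<open>B \<ge> 0\<close>
        by (simp add: ennreal_mult[symmetric] ennreal_leI)
    qed simp
  qed
  also have "\<dots> = ennreal A * ennreal b + ennreal B * ennreal (b powr (1 - a) / (a - 1))"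
    using assms by (simp add: nn_integral_add nn_integral_cmult nn_integral_powr_atLeast)
  also have "\<dots> = ennreal (A * b + B * (b powr (1 - a) / (a - 1)))"
    using assms by (simp add: ennreal_mult[symmetric] ennreal_plus[symmetric] del: ennreal_plus)
  finally show ?thesis .
qed

lemma inv_le_iff_le_mono_on:
  fixes \<phi> \<phi>inv :: "real \<Rightarrow> real"
  assumes mono: "mono_on {0<..} \<phi>"
    and inv1: "\<forall>t>0. \<phi>inv t > 0 \<and> \<phi> (\<phi>inv t) = t" and inv2: "\<forall>r>0. \<phi>inv (\<phi> r) = r"
    and "r > 0" "t > 0"
  shows "\<phi>inv t \<le> r \<longleftrightarrow> t \<le> \<phi> r"
proof -
  have inv_t: "\<phi>inv t > 0" "\<phi> (\<phi>inv t) = t" using inv1 \<open>t > 0\<close> by auto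
  show ?thesis
  proof
    assume "\<phi>inv t \<le> r"
    then have "\<phi> (\<phi>inv t) \<le> \<phi> r"
      by (intro mono_onD[OF mono]) (use inv_t \<open>r > 0\<close> in auto)
    then show "t \<le> \<phi> r" using inv_t by simp
  next
    assume "t \<le> \<phi> r"
    show "\<phi>inv t \<le> r"
    proof (rule ccontr)
      assume "\<not> \<phi>inv t \<le> r"
      then have "\<phi> r \<le> \<phi> (\<phi>inv t)"
        by (intro mono_onD[OF mono]) (use \<open>r > 0\<close> in auto)
      then have "\<phi>inv t = \<phi>inv (\<phi> r)" using \<open>t \<le> \<phi> r\<close> inv_t by simp
      then show False using inv2 \<open>r > 0\<close> \<open>\<not> \<phi>inv t \<le> r\<close> by simp
    qed
  qed
qed

lemma inverse_volume_le_powr: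
  fixes V \<phi> :: "real \<Rightarrow> real"
  assumes "0 < r" "r < s" "V r > 0" "\<phi> r > 0" "\<phi> s > 0" "c1 > 0" "c4 > 0" "d1 > 0" "d4 > 0"
    and V_lower: "c1 * (s / r) powr d1 \<le> V s / V r"
    and phi_upper: "\<phi> s / \<phi> r \<le> c4 * (s / r) powr d4"
  shows "1 / V s \<le> (c4 * \<phi> r) powr (d1 / d4) / (c1 * V r) * \<phi> s powr (- (d1 / d4))"
proof -
  define a where "a = d1 / d4"
  define q where "q = (s / r) powr d1"
  have q: "q > 0" unfolding q_def using assms by simp
  have "\<phi> s / (c4 * \<phi> r) \<le> (s / r) powr d4"
    using phi_upper assms by (simp add: divide_le_eq mult.commute mult.left_commute)
  then have "(\<phi> s / (c4 * \<phi> r)) powr a \<le> ((s / r) powr d4) powr a"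
    using assms by (intro powr_mono2) (auto simp: a_def)
  also have "\<dots> = q" unfolding q_def a_def using \<open>d4 > 0\<close> by (simp add: powr_powr)
  finally have "\<phi> s powr a / (c4 * \<phi> r) powr a \<le> q"
    using assms by (simp add: powr_divide)
  then have phi_s: "\<phi> s powr a \<le> (c4 * \<phi> r) powr a * q"
    using assms by (simp add: divide_le_eq mult.commute)
  have V_s: "c1 * q * V r \<le> V s"
    using V_lower assms unfolding q_def by (simp add: le_divide_eq)
  have "1 / V s \<le> 1 / (c1 * q * V r)"
    using V_s q assms by (intro frac_le) auto
  also have "\<dots> = 1 / (c1 * V r) * (1 / q)" by simp
  also have "\<dots> \<le> 1 / (c1 * V r) * ((c4 * \<phi> r) powr a / \<phi> s powr a)"
    using phi_s q assms by (intro mult_left_mono) (simp_all add: field_simps)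
  also have "\<dots> = (c4 * \<phi> r) powr a / (c1 * V r) * \<phi> s powr (- a)"
    by (simp add: powr_minus_divide)
  finally show ?thesis unfolding a_def .
qed

lemma hk_profile_off_diag:
  "x \<noteq> y \<Longrightarrow> hk_profile V \<phi> \<phi>inv t x y = min (1 / V (\<phi>inv t)) (t / (V (dist x y) * \<phi> (dist x y)))"
  unfolding hk_profile_def by simp

lemma hk_profile_ge_half_inverse_volume:
  fixes V \<phi> \<phi>inv :: "real \<Rightarrow> real"
  assumes V_mono: "mono_on {0<..} V" and V_pos: "\<forall>r>0. V r > 0"
    and phi_mono: "mono_on {0<..} \<phi>" and phi_pos: "\<forall>r>0. \<phi> r > 0"
    and inv1: "\<forall>t>0. \<phi>inv t > 0 \<and> \<phi> (\<phi>inv t) = t" and inv2: "\<forall>r>0. \<phi>inv (\<phi> r) = r"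
    and "x \<noteq> y" and t: "\<phi> (dist x y) / 2 \<le> t" "t \<le> \<phi> (dist x y)"
  shows "1 / (2 * V (dist x y)) \<le> hk_profile V \<phi> \<phi>inv t x y"
proof -
  define r where "r = dist x y"
  have "r > 0" "V r > 0" "\<phi> r > 0" using \<open>x \<noteq> y\<close> V_pos phi_pos by (auto simp: r_def)
  with t have "t > 0" unfolding r_def by linarith
  then have "\<phi>inv t \<le> r"
    using inv_le_iff_le_mono_on[OF phi_mono inv1 inv2 \<open>r > 0\<close>] t by (simp add: r_def)
  then have "V (\<phi>inv t) \<le> V r"
    by (intro mono_onD[OF V_mono]) (use inv1 \<open>t > 0\<close> \<open>r > 0\<close> in auto)
  then have "1 / V r \<le> 1 / V (\<phi>inv t)"
    using V_pos inv1 \<open>t > 0\<close> by (intro frac_le) auto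
  moreover have "1 / (2 * V r) \<le> t / (V r * \<phi> r)"
    using t \<open>V r > 0\<close> \<open>\<phi> r > 0\<close> by (simp add: r_def field_simps)
  moreover have "1 / (2 * V r) \<le> 1 / V r" using \<open>V r > 0\<close> by (simp add: field_simps)
  ultimately show ?thesis using hk_profile_off_diag[OF \<open>x \<noteq> y\<close>] by (simp add: r_def)
qed

lemma hk_profile_le_inverse_volume:
  assumes "V (dist x y) > 0" "\<phi> (dist x y) > 0" "x \<noteq> y" "t \<le> \<phi> (dist x y)"
  shows "hk_profile V \<phi> \<phi>inv t x y \<le> 1 / V (dist x y)"
proof -
  have "t / (V (dist x y) * \<phi> (dist x y)) \<le> 1 / V (dist x y)"
    using assms by (simp add: field_simps)
  then show ?thesis using hk_profile_off_diag[OF \<open>x \<noteq> y\<close>] by simp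
qed

lemma hk_profile_le_powr:
  fixes V \<phi> \<phi>inv :: "real \<Rightarrow> real"
  assumes V_pos: "\<forall>r>0. V r > 0"
    and phi_mono: "mono_on {0<..} \<phi>" and phi_pos: "\<forall>r>0. \<phi> r > 0"
    and inv1: "\<forall>t>0. \<phi>inv t > 0 \<and> \<phi> (\<phi>inv t) = t" and inv2: "\<forall>r>0. \<phi>inv (\<phi> r) = r"
    and const_pos: "c1 > 0" "c4 > 0" "d1 > 0" "d4 > 0"
    and V_lower: "\<forall>r R. 0 < r \<and> r < R \<longrightarrow> c1 * (R / r) powr d1 \<le> V R / V r"
    and phi_upper: "\<forall>r R. 0 < r \<and> r < R \<longrightarrow> \<phi> R / \<phi> r \<le> c4 * (R / r) powr d4"
    and "x \<noteq> y" and t: "\<phi> (dist x y) < t"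
  shows "hk_profile V \<phi> \<phi>inv t x y
    \<le> (c4 * \<phi> (dist x y)) powr (d1 / d4) / (c1 * V (dist x y)) * t powr (- (d1 / d4))"
proof -
  define r where "r = dist x y"
  define s where "s = \<phi>inv t"
  have "r > 0" "V r > 0" "\<phi> r > 0" using \<open>x \<noteq> y\<close> V_pos phi_pos by (auto simp: r_def)
  with t have "t > 0" unfolding r_def by linarith
  then have "\<phi> s = t" using inv1 unfolding s_def by blast
  have "r < s"
    using inv_le_iff_le_mono_on[OF phi_mono inv1 inv2 \<open>r > 0\<close> \<open>t > 0\<close>] t by (simp add: r_def s_def)
  have "1 / V s \<le> (c4 * \<phi> r) powr (d1 / d4) / (c1 * V r) * \<phi> s powr (- (d1 / d4))"
    using \<open>r > 0\<close> \<open>r < s\<close> \<open>V r > 0\<close> \<open>\<phi> r > 0\<close> \<open>t > 0\<close> \<open>\<phi> s = t\<close> const_pos V_lower phi_upper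
    by (intro inverse_volume_le_powr) auto
  then show ?thesis
    using hk_profile_off_diag[OF \<open>x \<noteq> y\<close>] \<open>\<phi> s = t\<close> by (simp add: r_def s_def)
qed

lemma green_fun_ge:
  fixes V \<phi> \<phi>inv :: "real \<Rightarrow> real" and p :: "real \<Rightarrow> 'a::metric_space \<Rightarrow> 'a \<Rightarrow> real"
  assumes V_mono: "mono_on {0<..} V" and V_pos: "\<forall>r>0. V r > 0"
    and phi_mono: "mono_on {0<..} \<phi>" and phi_pos: "\<forall>r>0. \<phi> r > 0"
    and inv1: "\<forall>t>0. \<phi>inv t > 0 \<and> \<phi> (\<phi>inv t) = t" and inv2: "\<forall>r>0. \<phi>inv (\<phi> r) = r"
    and "C > 0" and p_lower: "\<forall>t>0. hk_profile V \<phi> \<phi>inv t x y / C \<le> p t x y"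
    and "x \<noteq> y"
  shows "ennreal (\<phi> (dist x y) / (4 * C * V (dist x y))) \<le> green_fun p x y"
proof -
  define r where "r = dist x y"
  have "r > 0" "V r > 0" "\<phi> r > 0" using \<open>x \<noteq> y\<close> V_pos phi_pos by (auto simp: r_def)
  have "1 / (2 * V r * C) \<le> p t x y" if "\<phi> r / 2 \<le> t" "t \<le> \<phi> r" for t
  proof -
    have "1 / (2 * V r) \<le> hk_profile V \<phi> \<phi>inv t x y"
      using hk_profile_ge_half_inverse_volume[OF V_mono V_pos phi_mono phi_pos inv1 inv2 \<open>x \<noteq> y\<close>]
        that by (simp add: r_def)
    then have "1 / (2 * V r) / C \<le> hk_profile V \<phi> \<phi>inv t x y / C"
      by (rule divide_right_mono) (use \<open>C > 0\<close> in simp)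
    moreover have "t > 0" using that \<open>\<phi> r > 0\<close> by linarith
    ultimately show ?thesis using p_lower by fastforce
  qed
  then have "ennreal (1 / (2 * V r * C) * (\<phi> r - \<phi> r / 2)) \<le> green_fun p x y"
    unfolding green_fun_def using \<open>\<phi> r > 0\<close> \<open>V r > 0\<close> \<open>C > 0\<close>
    by (intro nn_integral_Ioi_ge_const) auto
  moreover have "1 / (2 * V r * C) * (\<phi> r - \<phi> r / 2) = \<phi> r / (4 * C * V r)" by simp
  ultimately show ?thesis by (metis r_def)
qed

lemma green_fun_le:
  fixes V \<phi> \<phi>inv :: "real \<Rightarrow> real" and p :: "real \<Rightarrow> 'a::metric_space \<Rightarrow> 'a \<Rightarrow> real"
  assumes V_pos: "\<forall>r>0. V r > 0"
    and phi_mono: "mono_on {0<..} \<phi>" and phi_pos: "\<forall>r>0. \<phi> r > 0"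
    and inv1: "\<forall>t>0. \<phi>inv t > 0 \<and> \<phi> (\<phi>inv t) = t" and inv2: "\<forall>r>0. \<phi>inv (\<phi> r) = r"
    and const_pos: "c1 > 0" "c4 > 0" "d1 > 0" "d4 > 0"
    and V_lower: "\<forall>r R. 0 < r \<and> r < R \<longrightarrow> c1 * (R / r) powr d1 \<le> V R / V r"
    and phi_upper: "\<forall>r R. 0 < r \<and> r < R \<longrightarrow> \<phi> R / \<phi> r \<le> c4 * (R / r) powr d4"
    and "d4 < d1"
    and "C \<ge> 0" and p_upper: "\<forall>t>0. p t x y \<le> C * hk_profile V \<phi> \<phi>inv t x y"
    and "x \<noteq> y"
  shows "green_fun p x y
    \<le> ennreal (C * (1 + c4 powr (d1 / d4) / (c1 * (d1 / d4 - 1))) * (\<phi> (dist x y) / V (dist x y)))"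
proof -
  define r where "r = dist x y"
  define a where "a = d1 / d4"
  define K where "K = (c4 * \<phi> r) powr a / (c1 * V r)"
  have "a > 1" using \<open>d4 < d1\<close> const_pos by (simp add: a_def)
  have "r > 0" "V r > 0" "\<phi> r > 0" using \<open>x \<noteq> y\<close> V_pos phi_pos by (auto simp: r_def)
  have "K \<ge> 0" using const_pos \<open>V r > 0\<close> by (simp add: K_def)
  have near: "p t x y \<le> C / V r" if "0 < t" "t \<le> \<phi> r" for t
  proof -
    have "hk_profile V \<phi> \<phi>inv t x y \<le> 1 / V r"
      using hk_profile_le_inverse_volume[of V x y \<phi> t \<phi>inv] that \<open>V r > 0\<close> \<open>\<phi> r > 0\<close> \<open>x \<noteq> y\<close>
      by (simp add: r_def)
    then have "C * hk_profile V \<phi> \<phi>inv t x y \<le> C * (1 / V r)"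
      using \<open>C \<ge> 0\<close> by (rule mult_left_mono)
    then show ?thesis using p_upper \<open>t > 0\<close> by fastforce
  qed
  have far: "p t x y \<le> C * K * t powr (- a)" if "\<phi> r < t" for t
  proof -
    have "hk_profile V \<phi> \<phi>inv t x y \<le> K * t powr (- a)"
      using hk_profile_le_powr[OF V_pos phi_mono phi_pos inv1 inv2 const_pos V_lower phi_upper \<open>x \<noteq> y\<close>]
        that by (simp add: r_def K_def a_def)
    moreover have "t > 0" using that \<open>\<phi> r > 0\<close> by linarith
    ultimately have "C * hk_profile V \<phi> \<phi>inv t x y \<le> C * (K * t powr (- a))"
      using \<open>C \<ge> 0\<close> by (simp add: mult_left_mono)
    then show ?thesis using p_upper \<open>t > 0\<close> by (fastforce simp: mult.assoc)
  qed
  have "green_fun p x y \<le> ennreal (C / V r * \<phi> r + C * K * (\<phi> r powr (1 - a) / (a - 1)))"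
    unfolding green_fun_def using \<open>a > 1\<close> \<open>\<phi> r > 0\<close> \<open>V r > 0\<close> \<open>C \<ge> 0\<close> \<open>K \<ge> 0\<close> near far
    by (intro nn_integral_Ioi_le_const_powr) auto
  also have "C / V r * \<phi> r + C * K * (\<phi> r powr (1 - a) / (a - 1))
      = C * (1 + c4 powr a / (c1 * (a - 1))) * (\<phi> r / V r)"
  proof -
    have "(c4 * \<phi> r) powr a * \<phi> r powr (1 - a) = c4 powr a * \<phi> r"
      using \<open>\<phi> r > 0\<close> const_pos by (simp add: powr_mult powr_diff)
    then have "C * K * (\<phi> r powr (1 - a) / (a - 1)) = C * (c4 powr a / (c1 * (a - 1))) * (\<phi> r / V r)"
      unfolding K_def by (simp add: mult.commute mult.left_commute)
    then show ?thesis by (simp add: algebra_simps add_divide_distrib)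
  qed
  finally show ?thesis by (simp add: r_def a_def)
qed

theorem lemma4p6:
  fixes V \<phi> \<phi>inv :: "real \<Rightarrow> real"
    and p :: "real \<Rightarrow> 'a::{metric_space, second_countable_topology} \<Rightarrow> 'a \<Rightarrow> real"
    and c1 c2 c3 c4 d1 d2 d3 d4 :: real
  assumes V_mono: "mono_on {0<..} V" and V_pos: "\<forall>r>0. V r > 0"
    and phi_mono: "mono_on {0<..} \<phi>" and phi_pos: "\<forall>r>0. \<phi> r > 0"
    and phi_inv1: "\<forall>t>0. \<phi>inv t > 0 \<and> \<phi> (\<phi>inv t) = t"
    and phi_inv2: "\<forall>r>0. \<phi>inv (\<phi> r) = r"
    and consts_pos: "c1 > 0" "c2 > 0" "c3 > 0" "c4 > 0" "d1 > 0" "d2 > 0" "d3 > 0" "d4 > 0"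
    and V_scale: "\<forall>r R. 0 < r \<and> r < R \<longrightarrow>
        c1 * (R / r) powr d1 \<le> V R / V r \<and> V R / V r \<le> c2 * (R / r) powr d2"
    and phi_scale: "\<forall>r R. 0 < r \<and> r < R \<longrightarrow>
        c3 * (R / r) powr d3 \<le> \<phi> R / \<phi> r \<and> \<phi> R / \<phi> r \<le> c4 * (R / r) powr d4"
    and balls_rc: "\<forall>x r. compact (closure (ball (x::'a) r))"
    and p_meas: "\<forall>x y. (\<lambda>t. p t x y) \<in> borel_measurable lborel"
    and p_sym: "\<forall>t>0. \<forall>x y. p t x y = p t y x"
    and hk: "\<exists>C\<ge>1. \<forall>t>0. \<forall>x y.
        hk_profile V \<phi> \<phi>inv t x y / C \<le> p t x y \<and> p t x y \<le> C * hk_profile V \<phi> \<phi>inv t x y"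
    and d14: "d1 > d4"
  shows "\<exists>C\<ge>1. \<forall>x y. x \<noteq> y \<longrightarrow>
     ennreal (\<phi> (dist x y) / V (dist x y) / C) \<le> green_fun p x y \<and>
     green_fun p x y \<le> ennreal (C * (\<phi> (dist x y) / V (dist x y)))"
proof -
  obtain C0 where "C0 \<ge> 1" and hk_C0: "\<forall>t>0. \<forall>x y.
      hk_profile V \<phi> \<phi>inv t x y / C0 \<le> p t x y \<and> p t x y \<le> C0 * hk_profile V \<phi> \<phi>inv t x y"
    using hk by blast
  define X where "X = c4 powr (d1 / d4) / (c1 * (d1 / d4 - 1))"
  define C where "C = 4 * C0 * (1 + X)"
  have "X \<ge> 0" using d14 consts_pos by (simp add: X_def)
  then have "4 * C0 \<le> C" using \<open>C0 \<ge> 1\<close> by (simp add: C_def)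
  have V_lower: "\<forall>r R. 0 < r \<and> r < R \<longrightarrow> c1 * (R / r) powr d1 \<le> V R / V r"
    and phi_upper: "\<forall>r R. 0 < r \<and> r < R \<longrightarrow> \<phi> R / \<phi> r \<le> c4 * (R / r) powr d4"
    using V_scale phi_scale by blast+
  show ?thesis
  proof (intro exI[of _ C] conjI allI impI)
    show "C \<ge> 1" using \<open>4 * C0 \<le> C\<close> \<open>C0 \<ge> 1\<close> by linarith
    fix x y :: 'a
    assume "x \<noteq> y"
    define u where "u = \<phi> (dist x y) / V (dist x y)"
    have "u \<ge> 0" using \<open>x \<noteq> y\<close> V_pos phi_pos by (simp add: u_def less_imp_le)
    have "u / C \<le> u / (4 * C0)"
      using \<open>4 * C0 \<le> C\<close> \<open>C0 \<ge> 1\<close> \<open>u \<ge> 0\<close> by (intro divide_left_mono) auto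
    also have "\<dots> = \<phi> (dist x y) / (4 * C0 * V (dist x y))" by (simp add: u_def)
    finally have "u / C \<le> \<phi> (dist x y) / (4 * C0 * V (dist x y))" .
    moreover have "ennreal (\<phi> (dist x y) / (4 * C0 * V (dist x y))) \<le> green_fun p x y"
      by (rule green_fun_ge[OF V_mono V_pos phi_mono phi_pos phi_inv1 phi_inv2])
        (use hk_C0 \<open>C0 \<ge> 1\<close> \<open>x \<noteq> y\<close> in auto)
    ultimately show "ennreal (\<phi> (dist x y) / V (dist x y) / C) \<le> green_fun p x y"
      unfolding u_def by (metis ennreal_leI order_trans)
    have "C0 * (1 + X) * u \<le> C * u"
      using \<open>C0 \<ge> 1\<close> \<open>X \<ge> 0\<close> \<open>u \<ge> 0\<close> by (simp add: C_def mult_right_mono)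
    moreover have "green_fun p x y \<le> ennreal (C0 * (1 + X) * u)"
      unfolding X_def u_def
      by (rule green_fun_le[OF V_pos phi_mono phi_pos phi_inv1 phi_inv2 consts_pos(1,4,5,8)
            V_lower phi_upper d14])
        (use hk_C0 \<open>C0 \<ge> 1\<close> \<open>x \<noteq> y\<close> in auto)
    ultimately show "green_fun p x y \<le> ennreal (C * (\<phi> (dist x y) / V (dist x y)))"
      unfolding u_def by (metis ennreal_leI order_trans)
  qed
qed

end
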